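(* Let $\mathcal{P}=\{P_1,\ldots,P_n\}$, let $\mathcal{Q}\subseteq 2^{\mathcal{P}}$ and let $\mathcal{F}\subseteq 2^{\mathcal{P}}$ be a fail-prone system. Consider the ideal $I=\langle \xi_{\mathcal{Q}_{\bar X}},\ \xi_{\mathcal{Q}_{\bar Y}},\ \sigma+1\rangle\subseteq\mathbb{B}(\bar X,\bar Y)$ and let $\mathcal{G}$ be a Gröbner basis for $I$. If $\mathcal{G}=\{1\}$, then $\mathcal{Q}$ fulfills consistency, i.e. $Q_1\cap Q_2\neq\emptyset$ for all $Q_1,Q_2\in\mathcal{Q}$.
   Context: $\mathbb{B}=\mathbb{F}_2$ and $\mathbb{B}(\bar X,\bar Y)=\mathbb{B}[X_1,\ldots,X_n,Y_1,\ldots,Y_n]/\langle X_i^2-X_i,Y_i^2-Y_i\rangle$ is the Boolean polynomial ring. $\varphi:2^{\mathcal{P}}\to\mathbb{B}^n$ sends a set to its indicator vector. For $S\subseteq\mathcal{P}$, $\xi_S(\bar Z)=\prod_{i=1}^n(1+Z_i+\varphi(S)_i)$; for $\mathcal{A}\subseteq 2^{\mathcal{P}}$, $\xi_{\mathcal{A}_{\bar Z}}=\prod_{A\in\mathcal{A}}(\xi_A(\bar Z)+1)$. $\sigma(\bar X,\bar Y)=\prod_{i=1}^n(X_iY_i+1)$. A fail-prone system is a collection of subsets of $\mathcal{P}$ none of which is contained in another. Gröbner bases are with respect to the lexicographic order with block order $\bar Y<\bar X$ and $X_n\prec\cdots\prec X_1$, $Y_n\prec\cdots\prec Y_1$: a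 generating set $\mathcal{G}$ of $I$ such that every nonzero $f\in I$ has leading monomial divisible by the leading monomial of some $g\in\mathcal{G}$. *)

theory Defs
  imports Main "HOL-Library.Poly_Mapping" "HOL-Library.Z2"
begin

text \<open>Variables of the ring B(X,Y): X i and Y i, intended for 1 \<le> i \<le> n.\<close>
datatype var = X nat | Y nat

text \<open>Boolean (square-free) monomials: finite sets of variables; the product of
  monomials is the union (this encodes the relations X_i^2 = X_i, Y_i^2 = Y_i).\<close>
typedef bmono = "{A :: var set. finite A}" by auto

instantiation bmono :: comm_monoid_add
begin
definition zero_bmono :: bmono where "zero_bmono = Abs_bmono {}"
definition plus_bmono :: "bmono \<Rightarrow> bmono \<Rightarrow> bmono" where
  "plus_bmono a b = Abs_bmono (Rep_bmono a \<union> Rep_bmono b)"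
instance
proof
  fix a b c :: bmono
  show "a + b + c = a + (b + c)"
    using Rep_bmono[of a] Rep_bmono[of b] Rep_bmono[of c]
    by (simp add: plus_bmono_def Abs_bmono_inverse Un_assoc)
  show "a + b = b + a" by (simp add: plus_bmono_def Un_commute)
  show "0 + a = a" by (simp add: plus_bmono_def zero_bmono_def Abs_bmono_inverse Rep_bmono_inverse)
qed
end

text \<open>The Boolean polynomial ring B(X,Y) = F_2[X,Y]/<X_i^2-X_i, Y_i^2-Y_i>, represented by
  its canonical (square-free) normal forms: finitely supported F_2-valued functions on
  Boolean monomials.\<close>
type_synonym bpoly = "bmono \<Rightarrow>\<^sub>0 bit"

definition bvar :: "var \<Rightarrow> bpoly" where
  "bvar v = Poly_Mapping.single (Abs_bmono {v}) 1"

definition bconst :: "bool \<Rightarrow> bpoly" where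
  "bconst b = Poly_Mapping.single 0 (of_bool b)"

definition var_index :: "var \<Rightarrow> nat" where
  "var_index v = (case v of X i \<Rightarrow> i | Y i \<Rightarrow> i)"

definition bring :: "nat \<Rightarrow> bpoly set" where
  "bring n = {p. \<forall>m \<in> Poly_Mapping.keys p. \<forall>v \<in> Rep_bmono m. 1 \<le> var_index v \<and> var_index v \<le> n}"

definition ideal_gen :: "nat \<Rightarrow> bpoly set \<Rightarrow> bpoly set" where
  "ideal_gen n G = {(\<Sum>g\<in>S. h g * g) | S h. finite S \<and> S \<subseteq> G \<and> (\<forall>g\<in>S. h g \<in> bring n)}"

fun var_less :: "var \<Rightarrow> var \<Rightarrow> bool" where
  "var_less (X i) (X j) = (j < i)"
| "var_less (Y i) (Y j) = (j < i)"
| "var_less (Y i) (X j) = True"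
| "var_less (X i) (Y j) = False"

definition mono_less :: "bmono \<Rightarrow> bmono \<Rightarrow> bool" where
  "mono_less a b = (\<exists>v \<in> Rep_bmono b - Rep_bmono a.
      \<forall>w \<in> (Rep_bmono a - Rep_bmono b) \<union> (Rep_bmono b - Rep_bmono a). w = v \<or> var_less w v)"

definition lead_mono :: "bpoly \<Rightarrow> bmono" where
  "lead_mono p = (THE m. m \<in> Poly_Mapping.keys p \<and> (\<forall>m' \<in> Poly_Mapping.keys p. m' = m \<or> mono_less m' m))"

definition mono_dvd :: "bmono \<Rightarrow> bmono \<Rightarrow> bool" where
  "mono_dvd a b = (Rep_bmono a \<subseteq> Rep_bmono b)"

definition groebner_basis :: "nat \<Rightarrow> bpoly set \<Rightarrow> bpoly set \<Rightarrow> bool" where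
  "groebner_basis n G I = (G \<subseteq> bring n \<and> ideal_gen n G = I \<and>
     (\<forall>f \<in> I. f \<noteq> 0 \<longrightarrow> (\<exists>g \<in> G. g \<noteq> 0 \<and> mono_dvd (lead_mono g) (lead_mono f))))"

text \<open>xi_S(Z) = prod_{i=1}^n (1 + Z_i + phi(S)_i), with Z = X or Y; parties P_i are indices i.\<close>
definition xi :: "nat \<Rightarrow> (nat \<Rightarrow> var) \<Rightarrow> nat set \<Rightarrow> bpoly" where
  "xi n Z S = (\<Prod>i\<in>{1..n}. 1 + bvar (Z i) + bconst (i \<in> S))"

definition xi_sys :: "nat \<Rightarrow> (nat \<Rightarrow> var) \<Rightarrow> nat set set \<Rightarrow> bpoly" where
  "xi_sys n Z \<A> = (\<Prod>A\<in>\<A>. xi n Z A + 1)"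

definition sigma :: "nat \<Rightarrow> bpoly" where
  "sigma n = (\<Prod>i\<in>{1..n}. bvar (X i) * bvar (Y i) + 1)"

definition fail_prone :: "nat set set \<Rightarrow> bool" where
  "fail_prone F = (\<forall>A\<in>F. \<forall>B\<in>F. A \<subseteq> B \<longrightarrow> A = B)"

end

theory Submission
  imports Defs
begin

text \<open>If two members \<open>Q\<^sub>1, Q\<^sub>2\<close> of \<open>\<Q>\<close> were disjoint, evaluation at the 0/1 point
  \<open>X = \<phi>(Q\<^sub>1), Y = \<phi>(Q\<^sub>2)\<close> would be a ring homomorphism to \<open>\<bbbB>\<close> killing all three
  generators of \<open>I\<close>: \<open>\<xi>\<^bsub>\<Q>\<^sub>X\<^esub>\<close> has the vanishing factor \<open>\<xi>\<^bsub>Q\<^sub>1\<^esub>(X) + 1\<close>,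
  \<open>\<xi>\<^bsub>\<Q>\<^sub>Y\<^esub>\<close> the factor \<open>\<xi>\<^bsub>Q\<^sub>2\<^esub>(Y) + 1\<close>, and \<open>\<sigma> = 1\<close> since no \<open>i\<close> has
  \<open>X\<^sub>i = Y\<^sub>i = 1\<close>. Hence it kills \<open>I\<close>, which contains \<open>1\<close> because the Groebner
  basis \<open>{1}\<close> generates it.\<close>

definition bmono_eval :: "(var \<Rightarrow> bool) \<Rightarrow> bmono \<Rightarrow> bit" where
  "bmono_eval a m = of_bool (Rep_bmono m \<subseteq> {v. a v})"

definition bpoly_eval :: "(var \<Rightarrow> bool) \<Rightarrow> bpoly \<Rightarrow> bit" where
  "bpoly_eval a p = (\<Sum>m\<in>Poly_Mapping.keys p. Poly_Mapping.lookup p m * bmono_eval a m)"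

lemma bmono_eval_0: "bmono_eval a 0 = 1"
  by (simp add: bmono_eval_def zero_bmono_def Abs_bmono_inverse)

lemma bmono_eval_add: "bmono_eval a (m + m') = bmono_eval a m * bmono_eval a m'"
  using Rep_bmono[of m] Rep_bmono[of m']
  by (simp add: bmono_eval_def plus_bmono_def Abs_bmono_inverse)

lemma sum_single_lookup_keys:
  "(\<Sum>m\<in>Poly_Mapping.keys p. Poly_Mapping.single m (Poly_Mapping.lookup p m)) = p"
  by (rule poly_mapping_eqI)
     (simp add: lookup_sum lookup_single when_def in_keys_iff sum.delta' split: if_splits)

lemma bpoly_eval_single: "bpoly_eval a (Poly_Mapping.single m c) = c * bmono_eval a m"
  by (cases "c = 0") (simp_all add: bpoly_eval_def)

lemma bpoly_eval_add: "bpoly_eval a (p + q) = bpoly_eval a p + bpoly_eval a q"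
  unfolding bpoly_eval_def by (rule setsum_keys_plus_distrib) (simp_all only: mult_zero_left distrib_right)

lemma bpoly_eval_0: "bpoly_eval a 0 = 0"
  by (simp add: bpoly_eval_def)

lemma bpoly_eval_sum: "bpoly_eval a (\<Sum>i\<in>I. f i) = (\<Sum>i\<in>I. bpoly_eval a (f i))"
  by (induction I rule: infinite_finite_induct) (simp_all add: bpoly_eval_add bpoly_eval_0)

lemma bpoly_eval_1: "bpoly_eval a 1 = 1"
  by (simp add: bpoly_eval_def bmono_eval_0)

lemma bpoly_eval_mult: "bpoly_eval a (p * q) = bpoly_eval a p * bpoly_eval a q"
proof -
  let ?P = "Poly_Mapping.keys p" and ?Q = "Poly_Mapping.keys q"
  have "p * q = (\<Sum>m\<in>?P. \<Sum>m'\<in>?Q.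
      Poly_Mapping.single (m + m') (Poly_Mapping.lookup p m * Poly_Mapping.lookup q m'))"
    by (subst (1 2) sum_single_lookup_keys[symmetric])
       (simp add: sum_distrib_left sum_distrib_right mult_single sum.swap[of _ ?Q])
  then have "bpoly_eval a (p * q) = (\<Sum>m\<in>?P. \<Sum>m'\<in>?Q.
      (Poly_Mapping.lookup p m * bmono_eval a m) * (Poly_Mapping.lookup q m' * bmono_eval a m'))"
    by (simp add: bpoly_eval_sum bpoly_eval_single bmono_eval_add ac_simps)
  also have "\<dots> = bpoly_eval a p * bpoly_eval a q"
    by (simp only: bpoly_eval_def sum_product)
  finally show ?thesis .
qed

lemma bpoly_eval_prod: "bpoly_eval a (\<Prod>i\<in>I. f i) = (\<Prod>i\<in>I. bpoly_eval a (f i))"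
  by (induction I rule: infinite_finite_induct) (simp_all add: bpoly_eval_mult bpoly_eval_1)

lemma bpoly_eval_bvar: "bpoly_eval a (bvar v) = of_bool (a v)"
  by (simp add: bvar_def bpoly_eval_single bmono_eval_def Abs_bmono_inverse)

lemma bpoly_eval_bconst: "bpoly_eval a (bconst b) = of_bool b"
  by (simp add: bconst_def bpoly_eval_single bmono_eval_0)

lemma bit_add_self: "(x::bit) + x = 0"
  by (cases x) simp_all

lemma bpoly_eval_xi_indicator:
  assumes "\<And>i. i \<in> {1..n} \<Longrightarrow> a (Z i) = (i \<in> S)"
  shows "bpoly_eval a (xi n Z S) = 1"
proof -
  have "bpoly_eval a (xi n Z S) = (\<Prod>i\<in>{1..n}. 1 + of_bool (a (Z i)) + of_bool (i \<in> S))"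
    by (simp only: xi_def bpoly_eval_prod bpoly_eval_add bpoly_eval_1 bpoly_eval_bvar bpoly_eval_bconst)
  also have "\<dots> = 1"
    using assms by (simp add: add.assoc bit_add_self)
  finally show ?thesis .
qed

lemma bpoly_eval_xi_sys_member:
  assumes "finite \<A>" "S \<in> \<A>" "\<And>i. i \<in> {1..n} \<Longrightarrow> a (Z i) = (i \<in> S)"
  shows "bpoly_eval a (xi_sys n Z \<A>) = 0"
proof -
  have "bpoly_eval a (xi_sys n Z \<A>) = (\<Prod>A\<in>\<A>. bpoly_eval a (xi n Z A) + 1)"
    by (simp only: xi_sys_def bpoly_eval_prod bpoly_eval_add bpoly_eval_1)
  also have "\<dots> = 0"
    using assms bpoly_eval_xi_indicator[of n a Z S] by (intro prod_zero) (auto simp: bit_add_self)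
  finally show ?thesis .
qed

lemma bpoly_eval_sigma_add_1:
  assumes "\<And>i. i \<in> {1..n} \<Longrightarrow> \<not> (a (X i) \<and> a (Y i))"
  shows "bpoly_eval a (sigma n + 1) = 0"
proof -
  have "bpoly_eval a (sigma n) = (\<Prod>i\<in>{1..n}. of_bool (a (X i)) * of_bool (a (Y i)) + 1)"
    by (simp only: sigma_def bpoly_eval_prod bpoly_eval_add bpoly_eval_1 bpoly_eval_mult bpoly_eval_bvar)
  also have "\<dots> = 1"
    using assms by simp
  finally show ?thesis
    by (simp add: bpoly_eval_add bpoly_eval_1 bit_add_self)
qed

lemma bpoly_eval_ideal_gen_eq_0:
  assumes "\<And>g. g \<in> B \<Longrightarrow> bpoly_eval a g = 0" and "p \<in> ideal_gen n B"
  shows "bpoly_eval a p = 0"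
proof -
  obtain S h where "S \<subseteq> B" and "p = (\<Sum>g\<in>S. h g * g)"
    using assms(2) unfolding ideal_gen_def by blast
  then have "bpoly_eval a p = (\<Sum>g\<in>S. bpoly_eval a (h g) * bpoly_eval a g)"
    by (simp only: bpoly_eval_sum bpoly_eval_mult)
  also have "\<dots> = 0"
    using \<open>S \<subseteq> B\<close> assms(1) by (intro sum.neutral) auto
  finally show ?thesis .
qed

lemma one_mem_bring: "1 \<in> bring n"
  by (simp add: bring_def zero_bmono_def Abs_bmono_inverse)

lemma groebner_basis_subset: "groebner_basis n G I \<Longrightarrow> G \<subseteq> I"
proof
  fix g assume "groebner_basis n G I" and "g \<in> G"
  moreover have "g = (\<Sum>g'\<in>{g}. 1 * g')"
    by simp
  ultimately show "g \<in> I"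
    unfolding groebner_basis_def ideal_gen_def using one_mem_bring[of n]
    by (auto intro!: exI[of _ "{g}"] exI[of _ "\<lambda>_. 1"])
qed

theorem mainTheorem2:
  fixes n :: nat and Q F :: "nat set set" and G :: "bpoly set"
  assumes "Q \<subseteq> Pow {1..n}"
    and "F \<subseteq> Pow {1..n}"
    and "fail_prone F"
    and "groebner_basis n G (ideal_gen n {xi_sys n X Q, xi_sys n Y Q, sigma n + 1})"
    and "G = {1}"
  shows "\<forall>Q1\<in>Q. \<forall>Q2\<in>Q. Q1 \<inter> Q2 \<noteq> {}"
proof (intro ballI notI)
  fix Q1 Q2 assume "Q1 \<in> Q" "Q2 \<in> Q" "Q1 \<inter> Q2 = {}"
  define a where "a v = (case v of X i \<Rightarrow> i \<in> Q1 | Y i \<Rightarrow> i \<in> Q2)" for v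
  have "finite Q"
    using assms(1) by (rule finite_subset) simp
  then have "bpoly_eval a g = 0" if "g \<in> {xi_sys n X Q, xi_sys n Y Q, sigma n + 1}" for g
    using that bpoly_eval_xi_sys_member[of Q Q1 n a X] bpoly_eval_xi_sys_member[of Q Q2 n a Y]
      bpoly_eval_sigma_add_1[of n a] \<open>Q1 \<in> Q\<close> \<open>Q2 \<in> Q\<close> \<open>Q1 \<inter> Q2 = {}\<close>
    by (auto simp: a_def)
  moreover have "1 \<in> ideal_gen n {xi_sys n X Q, xi_sys n Y Q, sigma n + 1}"
    using groebner_basis_subset[OF assms(4)] assms(5) by blast
  ultimately have "bpoly_eval a 1 = 0"
    by (rule bpoly_eval_ideal_gen_eq_0)
  then show False
    by (simp add: bpoly_eval_1)
qed

end
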